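(* Let $\delta\le\theta\le1$, let $\tilde S$ be a $\theta\times1\times1$ slab in $\mathbb{R}^3$, and let $\mathbb{S}$ be a finite set of $\delta\times1\times1$ slabs contained in $\tilde S$, with a shading $Y$ satisfying $\lambda(\mathbb{S},Y)\ge\delta^\eta$. If $\theta$ is a typical angle of intersection for $\mathbb{S}$, then $|U(\mathbb{S},Y)|\gtrsim\delta^{2\eta}|\tilde S|$.
   Context: A slab of dimensions $\theta\times1\times1$ is a convex set whose outer John ellipsoid has axes of lengths $\sim\theta,1,1$. The angle between two slabs is the angle between the planes spanned by their two longest axes (defined up to error $\delta$). A shading $Y$ assigns $Y(S)\subset S$; $U(\mathbb{S},Y)=\bigcup Y(S)$; $\lambda(\mathbb{S},Y)=\sum|Y(S)|/\sum|S|$. Let $Tri(\mathbb{S})=\{(x,S_1,S_2):x\in Y(S_1)\cap Y(S_2)\}$ with the product of Lebesgue measure in $x$ and counting measure in $(S_1,S_2)$, and $Tri_\theta(\mathbb{S})=\{(x,S_1,S_2)\in Tri(\mathbb{S}):\angle(S_1,S_2)\sim\theta\}$. $\theta$ is a typical angle of intersection for $\mathbb{S}$ if $|Tri_\theta(\mathbb{S})|\approx|Tri(\mathbb{S})|$ up to factors polylogarithmic in $1/\delta$. *)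

theory Defs
  imports "HOL-Analysis.Analysis"
begin

definition orthonormal3 :: "real^3 \<Rightarrow> real^3 \<Rightarrow> real^3 \<Rightarrow> bool" where
  "orthonormal3 n u v \<longleftrightarrow> norm n = 1 \<and> norm u = 1 \<and> norm v = 1 \<and>
     n \<bullet> u = 0 \<and> n \<bullet> v = 0 \<and> u \<bullet> v = 0"

definition box3 :: "real^3 \<Rightarrow> real^3 \<Rightarrow> real^3 \<Rightarrow> real^3 \<Rightarrow> real \<Rightarrow> real \<Rightarrow> (real^3) set" where
  "box3 c n u v a b = {x. \<bar>(x - c) \<bullet> n\<bar> \<le> a / 2 \<and> \<bar>(x - c) \<bullet> u\<bar> \<le> b / 2 \<and> \<bar>(x - c) \<bullet> v\<bar> \<le> b / 2}"

text \<open>K is an a x 1 x 1 slab (with implicit comparability constant A \<ge> 1) whose two longest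
  axes span the plane with unit normal n: K is convex and sandwiched between two concentric
  boxes of dimensions (a/A) x (1/A) x (1/A) and (A a) x A x A with the same axes.
  (Equivalent, up to the constant, to the outer John ellipsoid having axes ~ a, 1, 1.)\<close>
definition slab :: "real \<Rightarrow> real \<Rightarrow> (real^3) set \<Rightarrow> real^3 \<Rightarrow> bool" where
  "slab A a K n \<longleftrightarrow> convex K \<and>
     (\<exists>c u v. orthonormal3 n u v \<and> box3 c n u v (a / A) (1 / A) \<subseteq> K \<and> K \<subseteq> box3 c n u v (A * a) A)"

definition plane_angle :: "real^3 \<Rightarrow> real^3 \<Rightarrow> real" where
  "plane_angle n1 n2 = arccos \<bar>n1 \<bullet> n2\<bar>"

end

theory Submission
  imports Defs
begin

(*
  Let f be the sum of the indicators of the shadings Y(S) and U its support. Cauchy-Schwarz on U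
  gives (sum |Y(S)|)^2 <= |U| * |Tri|. Two delta-slabs whose planes meet at an angle >~ theta
  intersect in volume <~ delta^2 / theta (use the two normals and their cross product as
  coordinates), so |Tri_theta| <~ N^2 delta^2 / theta for N slabs, while
  the density of the shading gives sum |Y(S)| >~ delta^eta N delta. Since theta is a typical angle,
  |Tri| <~ |Tri_theta| up to logarithmic factors, hence |U| >~ delta^(2 eta) theta, and theta is
  comparable to the volume of the ambient slab.
*)

lemma orthonormal3_expansion:
  assumes "orthonormal3 n u v"
  shows "y = (y \<bullet> n) *\<^sub>R n + (y \<bullet> u) *\<^sub>R u + (y \<bullet> v) *\<^sub>R v"
proof (rule ccontr)
  define z where "z = y - ((y \<bullet> n) *\<^sub>R n + (y \<bullet> u) *\<^sub>R u + (y \<bullet> v) *\<^sub>R v)"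
  assume "y \<noteq> (y \<bullet> n) *\<^sub>R n + (y \<bullet> u) *\<^sub>R u + (y \<bullet> v) *\<^sub>R v"
  then have "z \<noteq> 0"
    by (simp add: z_def)
  have unit: "n \<bullet> n = 1" "u \<bullet> u = 1" "v \<bullet> v = 1" and orth: "n \<bullet> u = 0" "n \<bullet> v = 0" "u \<bullet> v = 0"
    using assms by (auto simp: orthonormal3_def simp flip: power2_norm_eq_inner)
  have z_orth: "z \<bullet> n = 0" "z \<bullet> u = 0" "z \<bullet> v = 0"
    using unit orth
    by (simp_all add: z_def inner_diff_left inner_add_left inner_commute[of u n]
        inner_commute[of v n] inner_commute[of v u])
  have "independent {n, u, v, z}"
    using unit orth z_orth \<open>z \<noteq> 0\<close>
    by (intro pairwise_orthogonal_independent)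
      (auto simp: pairwise_def orthogonal_def inner_commute)
  then have "card {n, u, v, z} \<le> CARD(3)"
    using independent_bound by fastforce
  moreover have "n \<noteq> u" "n \<noteq> v" "u \<noteq> v" "z \<noteq> n" "z \<noteq> u" "z \<noteq> v"
    using unit orth z_orth by auto
  then have "card {n, u, v, z} = 4"
    by auto
  ultimately show False
    by simp
qed

lemma norm_sq_orthonormal3:
  assumes "orthonormal3 n u v"
  shows "norm y ^ 2 = (y \<bullet> n)\<^sup>2 + (y \<bullet> u)\<^sup>2 + (y \<bullet> v)\<^sup>2"
proof -
  have "norm y ^ 2 = y \<bullet> ((y \<bullet> n) *\<^sub>R n + (y \<bullet> u) *\<^sub>R u + (y \<bullet> v) *\<^sub>R v)"
    using orthonormal3_expansion[OF assms, of y] by (simp add: power2_norm_eq_inner)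
  then show ?thesis
    by (simp add: inner_add_right power2_eq_square)
qed

lemma matrix_rows3_mult_vector:
  "(vector [r1, r2, r3] :: real^3^3) *v x = vector [r1 \<bullet> x, r2 \<bullet> x, r3 \<bullet> x]"
  by (simp add: vec_eq_iff forall_3 matrix_vector_mult_def inner_vec_def)

lemma prod_3: "prod f (UNIV::3 set) = f 1 * f 2 * f 3"
  unfolding UNIV_3 by (simp add: ac_simps)

lemma measure_cbox_centred3:
  fixes p :: "real^3"
  assumes "0 \<le> a" "0 \<le> b" "0 \<le> c"
  shows "measure lebesgue (cbox (p - vector [a, b, c]) (p + vector [a, b, c])) = 8 * a * b * c"
proof -
  have "p \<in> cbox (p - vector [a, b, c]) (p + vector [a, b, c])"
    using assms by (simp add: mem_box_cart forall_3)
  then have "cbox (p - vector [a, b, c]) (p + vector [a, b, c]) \<noteq> {}"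
    by blast
  then show ?thesis
    by (simp add: content_cbox_cart prod_3)
qed

lemma norm_sq_le_box3:
  assumes "orthonormal3 n u v" "x \<in> box3 c n u v a b"
  shows "norm (x - c) ^ 2 \<le> (a / 2)\<^sup>2 + (b / 2)\<^sup>2 + (b / 2)\<^sup>2"
proof -
  have sq: "s\<^sup>2 \<le> r\<^sup>2" if "\<bar>s\<bar> \<le> r" for s r :: real
    using that power_mono[of "\<bar>s\<bar>" r 2] by simp
  have "((x - c) \<bullet> n)\<^sup>2 \<le> (a / 2)\<^sup>2" "((x - c) \<bullet> u)\<^sup>2 \<le> (b / 2)\<^sup>2" "((x - c) \<bullet> v)\<^sup>2 \<le> (b / 2)\<^sup>2"
    using assms(2) unfolding box3_def by (auto intro: sq)
  then show ?thesis
    unfolding norm_sq_orthonormal3[OF assms(1)] by linarith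
qed

lemma norm_le_box3:
  assumes frame: "orthonormal3 n u v" and x: "x \<in> box3 c n u v a b" and "a \<le> b"
  shows "norm (x - c) \<le> b"
proof -
  have "0 \<le> a"
    using x abs_ge_zero[of "(x - c) \<bullet> n"] unfolding box3_def mem_Collect_eq by linarith
  then have "(a / 2)\<^sup>2 \<le> (b / 2)\<^sup>2"
    using \<open>a \<le> b\<close> by (intro power_mono) auto
  then have "norm (x - c) ^ 2 \<le> b\<^sup>2"
    using norm_sq_le_box3[OF frame x] zero_le_power2[of b] by (simp add: power_divide, linarith)
  then show ?thesis
    by (rule power2_le_imp_le) (use \<open>0 \<le> a\<close> \<open>a \<le> b\<close> in simp)
qed

lemma compact_box3:
  assumes "orthonormal3 n u v"
  shows "compact (box3 c n u v a b)"
proof (rule iffD2[OF compact_eq_bounded_closed], rule conjI)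
  have "box3 c n u v a b \<subseteq> cball c (sqrt ((a / 2)\<^sup>2 + (b / 2)\<^sup>2 + (b / 2)\<^sup>2))"
    using norm_sq_le_box3[OF assms] by (auto simp: dist_norm norm_minus_commute real_le_rsqrt)
  then show "bounded (box3 c n u v a b)"
    using bounded_cball bounded_subset by blast
  show "closed (box3 c n u v a b)"
    unfolding box3_def by (intro closed_Collect_conj closed_Collect_le continuous_intros)
qed

lemma lmeasurable_box3: "orthonormal3 n u v \<Longrightarrow> box3 c n u v a b \<in> lmeasurable"
  by (rule lmeasurable_compact[OF compact_box3])

lemma measure_box3:
  assumes frame: "orthonormal3 n u v" and "0 \<le> a" "0 \<le> b"
  shows "measure lebesgue (box3 c n u v a b) = a * b * b"
proof -
  define L :: "real^3 \<Rightarrow> real^3" where "L x = vector [x \<bullet> n, x \<bullet> u, x \<bullet> v]" for x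
  define h :: "real^3" where "h = vector [a / 2, b / 2, b / 2]"
  have "linear L"
    by (rule linearI) (simp_all add: L_def vec_eq_iff forall_3 inner_add_left)
  moreover have "norm (L x) = norm x" for x
  proof -
    have "norm (L x) ^ 2 = L x \<bullet> L x"
      by (rule power2_norm_eq_inner)
    also have "\<dots> = (L x $ 1)\<^sup>2 + (L x $ 2)\<^sup>2 + (L x $ 3)\<^sup>2"
      by (simp only: inner_vec_def sum_3 inner_real_def power2_eq_square)
    also have "\<dots> = (x \<bullet> n)\<^sup>2 + (x \<bullet> u)\<^sup>2 + (x \<bullet> v)\<^sup>2"
      by (simp add: L_def)
    finally have "norm (L x) ^ 2 = (x \<bullet> n)\<^sup>2 + (x \<bullet> u)\<^sup>2 + (x \<bullet> v)\<^sup>2" .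
    then have "norm (L x) ^ 2 = norm x ^ 2"
      by (simp only: norm_sq_orthonormal3[OF frame])
    then show ?thesis
      by (simp add: power2_eq_iff_nonneg)
  qed
  ultimately have orth: "orthogonal_transformation L"
    by (simp add: orthogonal_transformation)
  have "box3 c n u v a b = L -` cbox (L c - h) (L c + h)"
    by (auto simp: box3_def L_def h_def mem_box_cart forall_3 inner_diff_left split: abs_split)
  then have image: "L ` box3 c n u v a b = cbox (L c - h) (L c + h)"
    using orthogonal_transformation_surj[OF orth] by (simp add: surj_image_vimage_eq)
  have "measure lebesgue (box3 c n u v a b) = measure lebesgue (L ` box3 c n u v a b)"
    by (rule measure_orthogonal_image[OF orth lmeasurable_box3[OF frame], symmetric])
  also have "\<dots> = measure lebesgue (cbox (L c - h) (L c + h))"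
    by (simp only: image)
  also have "\<dots> = a * b * b"
    using assms unfolding h_def by (subst measure_cbox_centred3) auto
  finally show ?thesis .
qed

lemma lmeasurable_slab:
  assumes "slab A a K n"
  shows "K \<in> lmeasurable"
proof -
  obtain c u v where frame: "orthonormal3 n u v" and "convex K" and "K \<subseteq> box3 c n u v (A * a) A"
    using assms unfolding slab_def by blast
  then have "bounded K"
    using compact_imp_bounded[OF compact_box3[OF frame]] bounded_subset by blast
  with \<open>convex K\<close> show ?thesis
    by (rule measurable_convex)
qed

lemma
  assumes "slab A a K n" "0 < A" "0 \<le> a"
  shows measure_slab_ge: "a / A ^ 3 \<le> measure lebesgue K"
    and measure_slab_le: "measure lebesgue K \<le> A ^ 3 * a"
proof -
  obtain c u v where frame: "orthonormal3 n u v"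
    and inner: "box3 c n u v (a / A) (1 / A) \<subseteq> K" and outer: "K \<subseteq> box3 c n u v (A * a) A"
    using assms(1) unfolding slab_def by blast
  have "measure lebesgue (box3 c n u v (a / A) (1 / A)) \<le> measure lebesgue K"
    using lmeasurable_slab[OF assms(1)]
    by (intro measure_mono_fmeasurable[OF inner] fmeasurableD lmeasurable_box3[OF frame])
  then show "a / A ^ 3 \<le> measure lebesgue K"
    using assms by (simp add: measure_box3[OF frame] power3_eq_cube)
  have "measure lebesgue K \<le> measure lebesgue (box3 c n u v (A * a) A)"
    using lmeasurable_slab[OF assms(1)]
    by (intro measure_mono_fmeasurable[OF outer] fmeasurableD lmeasurable_box3[OF frame])
  then show "measure lebesgue K \<le> A ^ 3 * a"
    using assms by (simp add: measure_box3[OF frame] power3_eq_cube mult_ac)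
qed

lemma five_sixths_le_sin:
  fixes x :: real
  assumes "0 \<le> x" "x \<le> 1"
  shows "5 / 6 * x \<le> sin x"
proof -
  have "\<bar>sin x - (\<Sum>m<3. sin_coeff m * x ^ m)\<bar> \<le> inverse (fact 3) * \<bar>x\<bar> ^ 3"
    by (rule Maclaurin_sin_bound)
  then have "\<bar>sin x - x\<bar> \<le> x ^ 3 / 6"
    using assms by (simp add: eval_nat_numeral sin_coeff_def)
  then have "x - x ^ 3 / 6 \<le> sin x"
    unfolding abs_le_iff by linarith
  moreover have "x * x \<le> 1"
    using assms by (simp add: mult_le_one)
  then have "x ^ 3 \<le> x"
    using assms by (simp add: power3_eq_cube mult_left_le_one_le)
  ultimately show ?thesis
    by linarith
qed

lemma norm_cross3_eq_sin_plane_angle: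
  assumes "norm n1 = 1" "norm n2 = 1"
  shows "norm (cross3 n1 n2) = sin (plane_angle n1 n2)"
proof -
  have "\<bar>n1 \<bullet> n2\<bar> \<le> 1"
    using Cauchy_Schwarz_ineq2[of n1 n2] assms by simp
  moreover have "norm (cross3 n1 n2) ^ 2 = 1 - (n1 \<bullet> n2)\<^sup>2"
    using norm_cross_dot[of n1 n2] assms by simp
  ultimately show ?thesis
    unfolding plane_angle_def by (simp add: sin_arccos_abs real_sqrt_unique)
qed

lemma det_rows_cross3: "det (vector [x, y, cross3 x y] :: real^3^3) = (norm (cross3 x y))\<^sup>2"
proof -
  have "det (vector [x, y, cross3 x y] :: real^3^3) = x \<bullet> cross3 y (cross3 x y)"
    by (rule dot_cross_det[symmetric])
  also have "\<dots> = cross3 x y \<bullet> cross3 x y"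
    by (metis cross_triple inner_commute)
  finally show ?thesis
    by (simp add: power2_norm_eq_inner)
qed

lemma measure_Int_box3_le:
  assumes frame1: "orthonormal3 n1 u1 v1" and frame2: "orthonormal3 n2 u2 v2"
    and "0 \<le> a" "a \<le> b" and "cross3 n1 n2 \<noteq> 0"
  shows "measure lebesgue (box3 c1 n1 u1 v1 a b \<inter> box3 c2 n2 u2 v2 a b)
           \<le> 2 * a\<^sup>2 * b / norm (cross3 n1 n2)"
proof -
  define w where "w = cross3 n1 n2"
  define P where "P = box3 c1 n1 u1 v1 a b \<inter> box3 c2 n2 u2 v2 a b"
  define f :: "real^3 \<Rightarrow> real^3" where "f = (*v) (vector [n1, n2, w])"
  define p :: "real^3" where "p = vector [n1 \<bullet> c1, n2 \<bullet> c2, w \<bullet> c1]"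
  define h :: "real^3" where "h = vector [a / 2, a / 2, norm w * b]"
  have "linear f"
    unfolding f_def by simp
  have P: "P \<in> lmeasurable"
    unfolding P_def
    by (intro fmeasurable_Int_fmeasurable lmeasurable_box3 fmeasurableD frame1 frame2)
  \<comment> \<open>f has Jacobian \<open>norm w ^ 2\<close> and maps P into a box of sides a, a, \<open>2 * norm w * b\<close>\<close>
  have "f ` P \<subseteq> cbox (p - h) (p + h)"
  proof clarify
    fix x assume "x \<in> P"
    then have x1: "x \<in> box3 c1 n1 u1 v1 a b" and x2: "x \<in> box3 c2 n2 u2 v2 a b"
      by (auto simp: P_def)
    have "\<bar>w \<bullet> (x - c1)\<bar> \<le> norm w * b"
      using Cauchy_Schwarz_ineq2[of w "x - c1"] norm_le_box3[OF frame1 x1 \<open>a \<le> b\<close>]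
      by (meson mult_left_mono norm_ge_zero order_trans)
    moreover have "\<bar>n1 \<bullet> x - n1 \<bullet> c1\<bar> \<le> a / 2" "\<bar>n2 \<bullet> x - n2 \<bullet> c2\<bar> \<le> a / 2"
      using x1 x2
      by (auto simp: box3_def inner_diff_left inner_commute[of x n1] inner_commute[of c1 n1]
          inner_commute[of x n2] inner_commute[of c2 n2])
    ultimately show "f x \<in> cbox (p - h) (p + h)"
      unfolding abs_le_iff
      by (simp add: f_def p_def h_def matrix_rows3_mult_vector mem_box_cart forall_3
          inner_diff_right; linarith)
  qed
  then have "measure lebesgue (f ` P) \<le> measure lebesgue (cbox (p - h) (p + h))"
    by (intro measure_mono_fmeasurable fmeasurableD measurable_linear_image[OF \<open>linear f\<close> P]) auto
  also have "\<dots> = norm w * (2 * a\<^sup>2 * b)"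
    using assms(3,4) unfolding h_def by (subst measure_cbox_centred3) (auto simp: power2_eq_square)
  finally have "norm w * (norm w * measure lebesgue P) \<le> norm w * (2 * a\<^sup>2 * b)"
    using measure_linear_image[OF \<open>linear f\<close> P]
    by (simp add: f_def w_def det_rows_cross3 power2_eq_square)
  then have "norm w * measure lebesgue P \<le> 2 * a\<^sup>2 * b"
    using \<open>cross3 n1 n2 \<noteq> 0\<close> by (simp add: w_def)
  then show ?thesis
    using \<open>cross3 n1 n2 \<noteq> 0\<close> by (simp add: P_def w_def field_simps)
qed

lemma measure_Int_slabs_le:
  assumes slab1: "slab A d K1 n1" and slab2: "slab A d K2 n2"
    and "1 \<le> A" "0 \<le> d" "d \<le> 1" "0 < x" "x \<le> 1" "x \<le> plane_angle n1 n2"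
  shows "measure lebesgue (K1 \<inter> K2) \<le> 3 * A ^ 3 * d\<^sup>2 / x"
proof -
  obtain c1 u1 v1 where frame1: "orthonormal3 n1 u1 v1" and K1: "K1 \<subseteq> box3 c1 n1 u1 v1 (A * d) A"
    using slab1 unfolding slab_def by blast
  obtain c2 u2 v2 where frame2: "orthonormal3 n2 u2 v2" and K2: "K2 \<subseteq> box3 c2 n2 u2 v2 (A * d) A"
    using slab2 unfolding slab_def by blast
  have unit: "norm n1 = 1" "norm n2 = 1"
    using frame1 frame2 by (auto simp: orthonormal3_def)
  have "plane_angle n1 n2 \<le> pi / 2"
    unfolding plane_angle_def using Cauchy_Schwarz_ineq2[of n1 n2] unit
    by (intro arccos_le_pi2) auto
  moreover have "x \<le> pi / 2"
    using \<open>x \<le> 1\<close> pi_gt3 by linarith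
  ultimately have "sin x \<le> sin (plane_angle n1 n2)"
    using assms(6,8) by (intro sin_monotone_2pi_le) auto
  then have sin_bound: "5 / 6 * x \<le> norm (cross3 n1 n2)"
    using five_sixths_le_sin[of x] assms(6,7) norm_cross3_eq_sin_plane_angle[OF unit] by simp
  then have "0 < norm (cross3 n1 n2)"
    using \<open>0 < x\<close> by linarith
  have "measure lebesgue (K1 \<inter> K2)
          \<le> measure lebesgue (box3 c1 n1 u1 v1 (A * d) A \<inter> box3 c2 n2 u2 v2 (A * d) A)"
    using K1 K2
    by (intro measure_mono_fmeasurable fmeasurableD fmeasurable_Int_fmeasurable lmeasurable_box3
        lmeasurable_slab[OF slab1] lmeasurable_slab[OF slab2] frame1 frame2) auto
  also have "\<dots> \<le> 2 * (A * d)\<^sup>2 * A / norm (cross3 n1 n2)"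
    using assms(3-5) \<open>0 < norm (cross3 n1 n2)\<close>
    by (intro measure_Int_box3_le frame1 frame2) (auto simp: mult_left_le)
  also have "\<dots> \<le> 2 * (A * d)\<^sup>2 * A / (5 / 6 * x)"
    using assms(3,6) sin_bound \<open>0 < norm (cross3 n1 n2)\<close> by (intro divide_left_mono) auto
  also have "\<dots> \<le> 3 * A ^ 3 * d\<^sup>2 / x"
    using assms(3,6) by (simp add: field_simps power2_eq_square power3_eq_cube)
  finally show ?thesis .
qed

(* tri_measure M Y P is the measure of the part of Tri lying over the index pairs in P;
   P = I \<times> I gives |Tri| and P = pairs_at_angle A \<theta> nrm I gives |Tri_\<theta>|. *)
definition tri_measure :: "'a measure \<Rightarrow> ('i \<Rightarrow> 'a set) \<Rightarrow> ('i \<times> 'i) set \<Rightarrow> real" where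
  "tri_measure M Y P = (\<Sum>p\<in>P. measure M (Y (fst p) \<inter> Y (snd p)))"

lemma sum_indicator_squared:
  "(\<Sum>i\<in>I. indicator (Y i) x :: real)\<^sup>2 = (\<Sum>p\<in>I \<times> I. indicator (Y (fst p) \<inter> Y (snd p)) x)"
proof -
  have "(\<Sum>i\<in>I. indicator (Y i) x :: real)\<^sup>2 = (\<Sum>i\<in>I. \<Sum>j\<in>I. indicator (Y i) x * indicator (Y j) x)"
    by (simp add: power2_eq_square sum_product)
  also have "\<dots> = (\<Sum>p\<in>I \<times> I. indicator (Y (fst p) \<inter> Y (snd p)) x)"
    by (simp add: sum.cartesian_product split_beta indicator_inter_arith)
  finally show ?thesis .
qed

lemma AM_GM_tri_measure:
  fixes M :: "'a measure" and Y :: "'i \<Rightarrow> 'a set"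
  assumes "finite I" and Y: "\<And>i. i \<in> I \<Longrightarrow> Y i \<in> fmeasurable M" and "0 < t"
  shows "2 * t * (\<Sum>i\<in>I. measure M (Y i)) \<le> tri_measure M Y (I \<times> I) + t\<^sup>2 * measure M (\<Union>i\<in>I. Y i)"
proof -
  define U where "U = (\<Union>i\<in>I. Y i)"
  define f :: "'a \<Rightarrow> real" where "f = (\<lambda>x. \<Sum>i\<in>I. indicator (Y i) x)"
  have U: "U \<in> fmeasurable M"
    unfolding U_def using assms by (intro fmeasurable.finite_UN) auto
  have Y_Int: "Y (fst p) \<inter> Y (snd p) \<in> fmeasurable M" if "p \<in> I \<times> I" for p
    using that Y by (intro fmeasurable_Int_fmeasurable fmeasurableD) auto
  have int_f: "integrable M f" and integral_f: "integral\<^sup>L M f = (\<Sum>i\<in>I. measure M (Y i))"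
    using Y by (auto simp: f_def fmeasurable_def integral_sum)
  have int_f2: "integrable M (\<lambda>x. (f x)\<^sup>2)"
    and integral_f2: "integral\<^sup>L M (\<lambda>x. (f x)\<^sup>2) = tri_measure M Y (I \<times> I)"
    using Y_Int
    by (auto simp: f_def tri_measure_def sum_indicator_squared fmeasurable_def integral_sum)
  have int_U: "integrable M (indicator U :: 'a \<Rightarrow> real)"
    using U by (auto simp: fmeasurable_def)
  have "2 * t * f x \<le> (f x)\<^sup>2 + t\<^sup>2 * indicator U x" for x
  proof (cases "x \<in> U")
    case True
    then show ?thesis
      using sum_squares_bound[of "f x" t] by (simp add: power2_eq_square mult_ac)
  next
    case False
    then show ?thesis
      by (simp add: f_def U_def)
  qed
  then have "integral\<^sup>L M (\<lambda>x. 2 * t * f x) \<le> integral\<^sup>L M (\<lambda>x. (f x)\<^sup>2 + t\<^sup>2 * indicator U x)"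
    using int_f int_f2 int_U by (intro integral_mono) auto
  then show ?thesis
    using int_f2 int_U U by (simp add: integral_f integral_f2 U_def)
qed

lemma Cauchy_Schwarz_tri_measure:
  fixes M :: "'a measure" and Y :: "'i \<Rightarrow> 'a set"
  assumes "finite I" and Y: "\<And>i. i \<in> I \<Longrightarrow> Y i \<in> fmeasurable M"
  shows "(\<Sum>i\<in>I. measure M (Y i))\<^sup>2 \<le> measure M (\<Union>i\<in>I. Y i) * tri_measure M Y (I \<times> I)"
proof -
  define S where "S = (\<Sum>i\<in>I. measure M (Y i))"
  define T where "T = tri_measure M Y (I \<times> I)"
  define U where "U = measure M (\<Union>i\<in>I. Y i)"
  have "0 \<le> S" "0 \<le> T"
    by (simp_all add: S_def T_def tri_measure_def sum_nonneg)
  have "0 \<le> U"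
    by (simp add: U_def)
  have "S = 0" if "U = 0"
  proof -
    have "measure M (Y i) \<le> U" if "i \<in> I" for i
      using that assms by (auto simp: U_def intro!: measure_mono_fmeasurable fmeasurable.finite_UN)
    then show ?thesis
      using \<open>U = 0\<close> by (simp add: S_def sum_nonneg_eq_0_iff \<open>finite I\<close> antisym)
  qed
  then consider "S = 0" | "0 < S" "0 < U"
    using \<open>0 \<le> S\<close> \<open>0 \<le> U\<close> by (metis less_eq_real_def)
  then have "S\<^sup>2 \<le> U * T"
  proof cases
    case 1
    then show ?thesis
      using \<open>0 \<le> T\<close> \<open>0 \<le> U\<close> by simp
  next
    case 2
    then have "2 * (S / U) * S \<le> T + (S / U)\<^sup>2 * U"
      unfolding S_def T_def U_def by (intro AM_GM_tri_measure assms) simp_all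
    then show ?thesis
      using \<open>0 < U\<close> by (simp add: field_simps power2_eq_square)
  qed
  then show ?thesis
    by (simp add: S_def T_def U_def)
qed

definition pairs_at_angle :: "real \<Rightarrow> real \<Rightarrow> ('i \<Rightarrow> real^3) \<Rightarrow> 'i set \<Rightarrow> ('i \<times> 'i) set" where
  "pairs_at_angle A \<theta> nrm I = {p \<in> I \<times> I. \<theta> / A \<le> plane_angle (nrm (fst p)) (nrm (snd p))
                                   \<and> plane_angle (nrm (fst p)) (nrm (snd p)) \<le> A * \<theta>}"

lemma tri_measure_pairs_at_angle_le:
  assumes "finite I" "1 \<le> A" "0 < \<delta>" "\<delta> \<le> \<theta>" "\<theta> \<le> 1"
    and slabs: "\<And>i. i \<in> I \<Longrightarrow> slab A \<delta> (Sl i) (nrm i)"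
    and shading: "\<And>i. i \<in> I \<Longrightarrow> Y i \<subseteq> Sl i" "\<And>i. i \<in> I \<Longrightarrow> Y i \<in> sets lebesgue"
  shows "tri_measure lebesgue Y (pairs_at_angle A \<theta> nrm I) \<le> card I ^ 2 * (3 * A ^ 4 * \<delta>\<^sup>2 / \<theta>)"
proof -
  have "measure lebesgue (Y i \<inter> Y j) \<le> 3 * A ^ 4 * \<delta>\<^sup>2 / \<theta>"
    if "(i, j) \<in> pairs_at_angle A \<theta> nrm I" for i j
  proof -
    have ij: "i \<in> I" "j \<in> I" "\<theta> / A \<le> plane_angle (nrm i) (nrm j)"
      using that by (auto simp: pairs_at_angle_def)
    have "Sl i \<in> lmeasurable" "Sl j \<in> lmeasurable"
      using lmeasurable_slab[OF slabs] ij by auto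
    then have "measure lebesgue (Y i \<inter> Y j) \<le> measure lebesgue (Sl i \<inter> Sl j)"
      using ij shading by (intro measure_mono_fmeasurable) (auto intro: fmeasurable_Int_fmeasurable)
    also have "\<dots> \<le> 3 * A ^ 3 * \<delta>\<^sup>2 / (\<theta> / A)"
      using ij slabs assms(2-5)
      by (intro measure_Int_slabs_le) (auto simp: field_simps)
    also have "\<dots> = 3 * A ^ 4 * \<delta>\<^sup>2 / \<theta>"
      using assms(2) by (simp add: field_simps flip: power_Suc)
    finally show ?thesis .
  qed
  then have "tri_measure lebesgue Y (pairs_at_angle A \<theta> nrm I)
               \<le> card (pairs_at_angle A \<theta> nrm I) * (3 * A ^ 4 * \<delta>\<^sup>2 / \<theta>)"
    unfolding tri_measure_def by (intro sum_bounded_above) auto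
  also have "\<dots> \<le> card I ^ 2 * (3 * A ^ 4 * \<delta>\<^sup>2 / \<theta>)"
  proof (intro mult_right_mono)
    have "card (pairs_at_angle A \<theta> nrm I) \<le> card (I \<times> I)"
      using \<open>finite I\<close> by (intro card_mono) (auto simp: pairs_at_angle_def)
    then show "real (card (pairs_at_angle A \<theta> nrm I)) \<le> real (card I ^ 2)"
      by (simp only: of_nat_le_iff card_cartesian_product power2_eq_square)
  qed (use assms(3,4) in simp)
  finally show ?thesis
    by simp
qed

lemma measure_UN_shading_ge:
  assumes "finite I" "I \<noteq> {}" "1 \<le> A" "0 < \<delta>" "\<delta> \<le> \<theta>" "\<theta> \<le> 1" "slab A \<theta> St n0"
    and slabs: "\<And>i. i \<in> I \<Longrightarrow> slab A \<delta> (Sl i) (nrm i)"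
    and shading: "\<And>i. i \<in> I \<Longrightarrow> Y i \<subseteq> Sl i" "\<And>i. i \<in> I \<Longrightarrow> Y i \<in> sets lebesgue"
    and density: "0 \<le> D" "D * (\<Sum>i\<in>I. measure lebesgue (Sl i)) \<le> (\<Sum>i\<in>I. measure lebesgue (Y i))"
    and typical: "0 \<le> P"
      "tri_measure lebesgue Y (I \<times> I) \<le> P * tri_measure lebesgue Y (pairs_at_angle A \<theta> nrm I)"
  shows "D\<^sup>2 * measure lebesgue St \<le> 3 * P * A ^ 13 * measure lebesgue (\<Union>i\<in>I. Y i)"
proof -
  define N where "N = real (card I)"
  define U where "U = measure lebesgue (\<Union>i\<in>I. Y i)"
  have "0 < N" "0 < A"
    using assms(1-3) by (simp_all add: N_def card_gt_0_iff)
  have "N * (\<delta> / A ^ 3) \<le> (\<Sum>i\<in>I. measure lebesgue (Sl i))"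
    using sum_mono[of I "\<lambda>_. \<delta> / A ^ 3"] measure_slab_ge[OF slabs \<open>0 < A\<close>] assms(4)
    by (simp add: N_def)
  then have "D * (N * (\<delta> / A ^ 3)) \<le> (\<Sum>i\<in>I. measure lebesgue (Y i))"
    using mult_left_mono[OF _ density(1)] density(2) order_trans by blast
  then have "(D * (N * (\<delta> / A ^ 3)))\<^sup>2 \<le> (\<Sum>i\<in>I. measure lebesgue (Y i))\<^sup>2"
    using density(1) assms(4) \<open>0 < N\<close> \<open>0 < A\<close> by (intro power_mono) auto
  also have "\<dots> \<le> U * tri_measure lebesgue Y (I \<times> I)"
    unfolding U_def using shading slabs
    by (intro Cauchy_Schwarz_tri_measure assms(1) fmeasurableI2[OF lmeasurable_slab]) auto
  also have "\<dots> \<le> U * (P * (N\<^sup>2 * (3 * A ^ 4 * \<delta>\<^sup>2 / \<theta>)))"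
    using order_trans[OF typical(2) mult_left_mono[OF tri_measure_pairs_at_angle_le[OF assms(1,3-6)
          slabs shading] typical(1)]]
    by (intro mult_left_mono) (simp_all add: U_def N_def)
  also have "\<dots> = (N * \<delta> / A ^ 3)\<^sup>2 * (3 * P * A ^ 10 * U / \<theta>)"
    using assms(3-5)
    by (simp add: field_simps power_mult_distrib power_divide flip: power_add power_mult)
  finally have "(N * \<delta> / A ^ 3)\<^sup>2 * D\<^sup>2 \<le> (N * \<delta> / A ^ 3)\<^sup>2 * (3 * P * A ^ 10 * U / \<theta>)"
    by (simp add: power_mult_distrib power_divide mult_ac)
  moreover have "0 < (N * \<delta> / A ^ 3)\<^sup>2"
    using \<open>0 < N\<close> assms(3,4) by simp
  ultimately have "D\<^sup>2 * \<theta> \<le> 3 * P * A ^ 10 * U"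
    using assms(4,5) mult_le_cancel_left_pos by (simp add: pos_le_divide_eq)
  have "D\<^sup>2 * measure lebesgue St \<le> D\<^sup>2 * (A ^ 3 * \<theta>)"
    using measure_slab_le[OF assms(7) \<open>0 < A\<close>] assms(4,5) by (intro mult_left_mono) auto
  also have "\<dots> = A ^ 3 * (D\<^sup>2 * \<theta>)"
    by (simp add: mult_ac)
  also have "\<dots> \<le> A ^ 3 * (3 * P * A ^ 10 * U)"
    using \<open>D\<^sup>2 * \<theta> \<le> 3 * P * A ^ 10 * U\<close> \<open>0 < A\<close> by (intro mult_left_mono) auto
  also have "\<dots> = 3 * P * A ^ 13 * measure lebesgue (\<Union>i\<in>I. Y i)"
    by (simp add: U_def mult_ac flip: power_add)
  finally show ?thesis .
qed

lemma inverse_mult_powr_neg_le: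
  fixes L C K :: real
  assumes "1 \<le> L" "0 < C" "C \<le> K"
  shows "1 / K * L powr - K \<le> 1 / (K * L powr C)"
proof -
  have "L powr - K \<le> L powr - C"
    using assms by (intro powr_mono) auto
  then have "1 / K * L powr - K \<le> 1 / K * L powr - C"
    using assms by (intro mult_left_mono) auto
  also have "\<dots> = 1 / (K * L powr C)"
    using assms by (simp add: powr_minus field_simps)
  finally show ?thesis .
qed

lemma measure_UN_shading_ge_typical_angle:
  assumes "1 \<le> A" "1 \<le> C" "0 < \<delta>" "\<delta> \<le> \<theta>" "\<theta> \<le> 1" "slab A \<theta> St n0" "finite I"
    and slabs: "\<And>i. i \<in> I \<Longrightarrow> slab A \<delta> (Sl i) (nrm i)"
    and shading: "\<And>i. i \<in> I \<Longrightarrow> Y i \<subseteq> Sl i" "\<And>i. i \<in> I \<Longrightarrow> Y i \<in> sets lebesgue"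
    and ratio: "\<delta> powr \<eta> \<le> (\<Sum>i\<in>I. measure lebesgue (Y i)) / (\<Sum>i\<in>I. measure lebesgue (Sl i))"
    and typical: "1 / C * (1 + ln (1 / \<delta>)) powr - C * tri_measure lebesgue Y (I \<times> I)
                    \<le> tri_measure lebesgue Y (pairs_at_angle A \<theta> nrm I)"
  shows "1 / (3 * C * A ^ 13) * (1 + ln (1 / \<delta>)) powr - (3 * C * A ^ 13) * \<delta> powr (2 * \<eta>)
           * measure lebesgue St \<le> measure lebesgue (\<Union>i\<in>I. Y i)"
proof -
  define L where "L = 1 + ln (1 / \<delta>)"
  define D where "D = \<delta> powr \<eta>"
  have "0 < D"
    using \<open>0 < \<delta>\<close> by (simp add: D_def)
  have "0 < (\<Sum>i\<in>I. measure lebesgue (Sl i))"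
    using ratio \<open>0 < D\<close> sum_nonneg[of I "\<lambda>i. measure lebesgue (Sl i)"]
    by (cases "(\<Sum>i\<in>I. measure lebesgue (Sl i)) = 0") (auto simp: D_def)
  then have "I \<noteq> {}"
    and density: "D * (\<Sum>i\<in>I. measure lebesgue (Sl i)) \<le> (\<Sum>i\<in>I. measure lebesgue (Y i))"
    using ratio by (auto simp: D_def pos_le_divide_eq mult.commute)
  have "1 \<le> L"
    using \<open>0 < \<delta>\<close> \<open>\<delta> \<le> \<theta>\<close> \<open>\<theta> \<le> 1\<close> by (simp add: L_def)
  have "0 < C * L powr C"
    using \<open>1 \<le> L\<close> assms(2) by simp
  then have "tri_measure lebesgue Y (I \<times> I)
              \<le> C * L powr C * tri_measure lebesgue Y (pairs_at_angle A \<theta> nrm I)"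
    using typical assms(2) by (simp add: L_def powr_minus pos_divide_le_eq field_simps)
  then have core:
    "D\<^sup>2 * measure lebesgue St \<le> 3 * (C * L powr C) * A ^ 13 * measure lebesgue (\<Union>i\<in>I. Y i)"
    using measure_UN_shading_ge[OF \<open>finite I\<close> \<open>I \<noteq> {}\<close> assms(1,3-6) slabs shading _ density]
      \<open>0 < D\<close> \<open>0 < C * L powr C\<close>
    by simp
  have "1 \<le> 3 * A ^ 13"
    using one_le_power[OF assms(1), of 13] by linarith
  then have "C \<le> 3 * C * A ^ 13"
    using mult_left_mono[of 1 "3 * A ^ 13" C] assms(2) by (simp add: mult_ac)
  then have "1 / (3 * C * A ^ 13) * L powr - (3 * C * A ^ 13) * (D\<^sup>2 * measure lebesgue St)
               \<le> 1 / (3 * C * A ^ 13 * L powr C) * (D\<^sup>2 * measure lebesgue St)"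
    using \<open>1 \<le> L\<close> assms(2) by (intro mult_right_mono inverse_mult_powr_neg_le) auto
  also have "\<dots> = D\<^sup>2 * measure lebesgue St / (3 * (C * L powr C) * A ^ 13)"
    by (simp add: mult_ac)
  also have "\<dots> \<le> measure lebesgue (\<Union>i\<in>I. Y i)"
  proof -
    have "0 < 3 * (C * L powr C) * A ^ 13"
      using \<open>0 < C * L powr C\<close> assms(1) by simp
    then show ?thesis
      using core by (subst pos_divide_le_eq) (simp_all add: mult_ac)
  qed
  finally show ?thesis
    by (simp add: L_def D_def power2_eq_square mult_ac flip: powr_add)
qed

theorem lemma6p8:
  fixes A C :: real
  assumes "A \<ge> 1" and "C \<ge> 1"
  shows "\<exists>K>0. \<forall>(\<delta>::real) (\<theta>::real) (\<eta>::real) (St :: (real^3) set) (I :: nat set)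
            (Sl :: nat \<Rightarrow> (real^3) set) (nrm :: nat \<Rightarrow> real^3) (Y :: nat \<Rightarrow> (real^3) set).
      0 < \<delta> \<and> \<delta> \<le> \<theta> \<and> \<theta> \<le> 1
      \<and> (\<exists>n0. slab A \<theta> St n0)
      \<and> finite I \<and> inj_on Sl I
      \<and> (\<forall>i\<in>I. slab A \<delta> (Sl i) (nrm i) \<and> Sl i \<subseteq> St)
      \<and> (\<forall>i\<in>I. Y i \<subseteq> Sl i \<and> Y i \<in> sets lebesgue)
      \<and> (\<Sum>i\<in>I. measure lebesgue (Y i)) / (\<Sum>i\<in>I. measure lebesgue (Sl i)) \<ge> \<delta> powr \<eta>
      \<and> (\<Sum>p\<in>{p\<in>I \<times> I. \<theta> / A \<le> plane_angle (nrm (fst p)) (nrm (snd p))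
                              \<and> plane_angle (nrm (fst p)) (nrm (snd p)) \<le> A * \<theta>}.
             measure lebesgue (Y (fst p) \<inter> Y (snd p)))
          \<ge> (1 / C) * (1 + ln (1 / \<delta>)) powr (- C) *
            (\<Sum>p\<in>I \<times> I. measure lebesgue (Y (fst p) \<inter> Y (snd p)))
      \<longrightarrow> measure lebesgue (\<Union>i\<in>I. Y i)
          \<ge> (1 / K) * (1 + ln (1 / \<delta>)) powr (- K) * \<delta> powr (2 * \<eta>) * measure lebesgue St"
  unfolding tri_measure_def[symmetric] pairs_at_angle_def[symmetric]
proof (intro exI[of _ "3 * C * A ^ 13"] conjI allI impI)
  show "0 < 3 * C * A ^ 13"
    using assms by simp
next
  fix \<delta> \<theta> \<eta> :: real and St :: "(real^3) set" and I :: "nat set" and Sl :: "nat \<Rightarrow> (real^3) set"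
    and nrm :: "nat \<Rightarrow> real^3" and Y :: "nat \<Rightarrow> (real^3) set"
  assume "0 < \<delta> \<and> \<delta> \<le> \<theta> \<and> \<theta> \<le> 1 \<and> (\<exists>n0. slab A \<theta> St n0) \<and> finite I \<and> inj_on Sl I
    \<and> (\<forall>i\<in>I. slab A \<delta> (Sl i) (nrm i) \<and> Sl i \<subseteq> St) \<and> (\<forall>i\<in>I. Y i \<subseteq> Sl i \<and> Y i \<in> sets lebesgue)
    \<and> \<delta> powr \<eta> \<le> (\<Sum>i\<in>I. measure lebesgue (Y i)) / (\<Sum>i\<in>I. measure lebesgue (Sl i))
    \<and> 1 / C * (1 + ln (1 / \<delta>)) powr - C * tri_measure lebesgue Y (I \<times> I)
        \<le> tri_measure lebesgue Y (pairs_at_angle A \<theta> nrm I)"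
  then obtain n0 where "0 < \<delta>" "\<delta> \<le> \<theta>" "\<theta> \<le> 1" "slab A \<theta> St n0" "finite I"
    and "\<And>i. i \<in> I \<Longrightarrow> slab A \<delta> (Sl i) (nrm i)"
    and "\<And>i. i \<in> I \<Longrightarrow> Y i \<subseteq> Sl i" "\<And>i. i \<in> I \<Longrightarrow> Y i \<in> sets lebesgue"
    and "\<delta> powr \<eta> \<le> (\<Sum>i\<in>I. measure lebesgue (Y i)) / (\<Sum>i\<in>I. measure lebesgue (Sl i))"
    and "1 / C * (1 + ln (1 / \<delta>)) powr - C * tri_measure lebesgue Y (I \<times> I)
           \<le> tri_measure lebesgue Y (pairs_at_angle A \<theta> nrm I)"
    by blast
  then show "1 / (3 * C * A ^ 13) * (1 + ln (1 / \<delta>)) powr - (3 * C * A ^ 13) * \<delta> powr (2 * \<eta>)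
               * measure lebesgue St \<le> measure lebesgue (\<Union>i\<in>I. Y i)"
    by (rule measure_UN_shading_ge_typical_angle[OF assms])
qed

end
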